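(* Let $\Gamma=(G,w,\ell)$ be a tropical curve, and let $(P,W)$ and $(P',W')$ be pairs with $P,P'\in\mathcal C_G$, $W,W'\subseteq V$, $P\cup W\neq\emptyset$, $P'\cup W'\ne\emptyset$. Then: (1) $D_{P,W}\sim D_{P',W'}$ if and only if $P=P'$; (2) $[D_{P,W}]$ is a theta-characteristic of $\Gamma$, i.e. $2D_{P,W}\sim K_\Gamma$.
   Context: A tropical curve is a triple $\Gamma=(G,w,\ell)$ where $G=(V,E)$ is a finite connected graph (loops and multiple edges allowed), $w\colon V\to\mathbb Z_{\ge 0}$ with $2w(v)-2+\deg_G(v)>0$ for all $v$ (loops count twice), and $\ell\colon E\to\mathbb R_{>0}$; it is viewed as a metric space with edges segments (circles for loops) of length $\ell(e)$, and $d(p,q)$ is the shortest path length. Extend $w$ to all points by $w(p)=0$ for $p\notin V$. Divisors, rational functions, linear equivalence $\sim$ and $\operatorname{Pic}(\Gamma)$ are the usual tropical ones; $K_\Gamma=\sum_{v\in V}(2w(v)-2+\deg_G(v))v$; a theta-characteristic is a class $[D]$ with $[2D]=[K_\Gamma]$. $\mathcal C_G$ is the set of $P\subseteq E$ such that every vertex has even degree in $P$. For $P\in\mathcal C_G$ and $W\subseteq V$ with $P\cup W\neq\emptyset$, let $\Gamma_{P,W}\subseteq\Gamma$ be the closed subset consisting of the edges in $P$ (with their endpoints) together with the vertices in $W$, and let $d_{P,W}(p)=d(p,\Gamma_{P,W})$. This function is piecewise linear, of slope $0$ on $P$ and $\pm1$ elsewhere, with at most one non-linear (critical) point in the interior of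 each edge. Let $\widehat G_{P,W}$ be the subdivision of $G$ obtained by inserting a vertex at each such interior critical point. The sub-orientation $O_{P,W}$ on $\widehat G_{P,W}$ is: on edges of $P$ choose any cyclic orientation (each vertex has equal in- and out-degree in $P$); orient every other edge of $\widehat G_{P,W}$ in the direction in which $d_{P,W}$ increases. For $p\in\Gamma$ let $\deg^-(p)$ be the number of edges of $\widehat G_{P,W}$ whose target is $p$ if $p\in V(\widehat G_{P,W})$, and $\deg^-(p)=1$ otherwise. Define $D_{P,W}:=\sum_{p\in\Gamma}(\deg^-(p)-1+w(p))p$ (a finite sum supported on $V(\widehat G_{P,W})$). *)

theory Defs
  imports Complex_Main
begin

text \<open>A finite graph with vertex set verts, edge set edges; each edge e has a
  reference parametrisation from src e to tgt e (loops: src e = tgt e).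
  Points of the metric graph: vertices, and interior points Pt e t with 0 < t < len e.\<close>

record ('v, 'e) tcurve =
  verts :: "'v set"
  edges :: "'e set"
  src   :: "'e \<Rightarrow> 'v"
  tgt   :: "'e \<Rightarrow> 'v"
  wt    :: "'v \<Rightarrow> nat"
  len   :: "'e \<Rightarrow> real"

datatype ('v, 'e) point = Vtx 'v | Pt 'e real

fun walk :: "('v, 'e) tcurve \<Rightarrow> 'v \<Rightarrow> ('e \<times> bool) list \<Rightarrow> 'v \<Rightarrow> bool" where
  "walk G u [] v = (u = v)"
| "walk G u ((e, b) # es) v =
     (e \<in> edges G \<and>
      (if b then src G e = u \<and> walk G (tgt G e) es v
            else tgt G e = u \<and> walk G (src G e) es v))"

definition walk_len :: "('v, 'e) tcurve \<Rightarrow> ('e \<times> bool) list \<Rightarrow> real" where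
  "walk_len G es = sum_list (map (\<lambda>(e, b). len G e) es)"

text \<open>degree (loops count twice)\<close>
definition vdeg :: "('v, 'e) tcurve \<Rightarrow> 'e set \<Rightarrow> 'v \<Rightarrow> nat" where
  "vdeg G P v = card {e \<in> P. src G e = v} + card {e \<in> P. tgt G e = v}"

definition tropical_curve :: "('v, 'e) tcurve \<Rightarrow> bool" where
  "tropical_curve G \<longleftrightarrow>
     finite (verts G) \<and> finite (edges G) \<and> verts G \<noteq> {} \<and>
     (\<forall>e \<in> edges G. src G e \<in> verts G \<and> tgt G e \<in> verts G \<and> len G e > 0) \<and>
     (\<forall>u \<in> verts G. \<forall>v \<in> verts G. \<exists>es. walk G u es v) \<and>
     (\<forall>v \<in> verts G. 2 * int (wt G v) - 2 + int (vdeg G (edges G) v) > 0)"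

definition points :: "('v, 'e) tcurve \<Rightarrow> ('v, 'e) point set" where
  "points G = Vtx ` verts G \<union> {Pt e t | e t. e \<in> edges G \<and> 0 < t \<and> t < len G e}"

definition vdist :: "('v, 'e) tcurve \<Rightarrow> 'v \<Rightarrow> 'v \<Rightarrow> real" where
  "vdist G u v = Inf {walk_len G es | es. walk G u es v}"

fun ends :: "('v, 'e) tcurve \<Rightarrow> ('v, 'e) point \<Rightarrow> ('v \<times> real) set" where
  "ends G (Vtx v) = {(v, 0)}"
| "ends G (Pt e t) = {(src G e, t), (tgt G e, len G e - t)}"

fun same_edge_dist :: "('v, 'e) point \<Rightarrow> ('v, 'e) point \<Rightarrow> real set" where
  "same_edge_dist (Pt e s) (Pt e' t) = (if e = e' then {\<bar>s - t\<bar>} else {})"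
| "same_edge_dist _ _ = {}"

text \<open>shortest path length between two points of the metric graph: a shortest path
  either stays inside one edge or leaves the start point through one of its bounding
  vertices and enters the end point through one of its bounding vertices\<close>
definition tdist :: "('v, 'e) tcurve \<Rightarrow> ('v, 'e) point \<Rightarrow> ('v, 'e) point \<Rightarrow> real" where
  "tdist G p q = Min ({x + vdist G a b + y | a x b y. (a, x) \<in> ends G p \<and> (b, y) \<in> ends G q}
                      \<union> same_edge_dist p q)"

definition at_param :: "('v, 'e) tcurve \<Rightarrow> 'e \<Rightarrow> real \<Rightarrow> ('v, 'e) point" where
  "at_param G e t = (if t \<le> 0 then Vtx (src G e) else if len G e \<le> t then Vtx (tgt G e) else Pt e t)"

type_synonym ('v, 'e) divisor = "('v, 'e) point \<Rightarrow> int"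

definition pw_linear_int :: "(real \<Rightarrow> real) \<Rightarrow> real \<Rightarrow> real \<Rightarrow> bool" where
  "pw_linear_int g a b \<longleftrightarrow>
     (\<exists>xs :: real list. length xs \<ge> 2 \<and> sorted_wrt (<) xs \<and> hd xs = a \<and> last xs = b \<and>
        (\<forall>i < length xs - 1. \<exists>m :: int. \<exists>c :: real.
            \<forall>s \<in> {xs ! i .. xs ! (i + 1)}. g s = of_int m * s + c))"

definition rational_fun :: "('v, 'e) tcurve \<Rightarrow> (('v, 'e) point \<Rightarrow> real) \<Rightarrow> bool" where
  "rational_fun G f \<longleftrightarrow> (\<forall>e \<in> edges G. pw_linear_int (\<lambda>t. f (at_param G e t)) 0 (len G e))"

definition rslope :: "(real \<Rightarrow> real) \<Rightarrow> real \<Rightarrow> real" where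
  "rslope g x = (THE D. (g has_real_derivative D) (at_right x))"

definition lslope :: "(real \<Rightarrow> real) \<Rightarrow> real \<Rightarrow> real" where
  "lslope g x = (THE D. (g has_real_derivative D) (at_left x))"

text \<open>order of f at p: sum of the outgoing slopes of f at p\<close>
fun ord_at :: "('v, 'e) tcurve \<Rightarrow> (('v, 'e) point \<Rightarrow> real) \<Rightarrow> ('v, 'e) point \<Rightarrow> real" where
  "ord_at G f (Vtx v) =
     (\<Sum>e \<in> {e \<in> edges G. src G e = v}. rslope (\<lambda>t. f (at_param G e t)) 0)
   + (\<Sum>e \<in> {e \<in> edges G. tgt G e = v}. - lslope (\<lambda>t. f (at_param G e t)) (len G e))"
| "ord_at G f (Pt e t) =
     rslope (\<lambda>s. f (at_param G e s)) t - lslope (\<lambda>s. f (at_param G e s)) t"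

definition lin_equiv :: "('v, 'e) tcurve \<Rightarrow> ('v, 'e) divisor \<Rightarrow> ('v, 'e) divisor \<Rightarrow> bool" where
  "lin_equiv G D1 D2 \<longleftrightarrow>
     (\<exists>f. rational_fun G f \<and> (\<forall>p \<in> points G. of_int (D1 p - D2 p) = ord_at G f p))"

definition canonical :: "('v, 'e) tcurve \<Rightarrow> ('v, 'e) divisor" where
  "canonical G p = (case p of
      Vtx v \<Rightarrow> if v \<in> verts G then 2 * int (wt G v) - 2 + int (vdeg G (edges G) v) else 0
    | Pt e t \<Rightarrow> 0)"

definition even_subgraph :: "('v, 'e) tcurve \<Rightarrow> 'e set \<Rightarrow> bool" where
  "even_subgraph G P \<longleftrightarrow> P \<subseteq> edges G \<and> (\<forall>v \<in> verts G. even (vdeg G P v))"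

text \<open>ori e = True: edge e oriented from src e to tgt e\<close>
definition head :: "('v, 'e) tcurve \<Rightarrow> ('e \<Rightarrow> bool) \<Rightarrow> 'e \<Rightarrow> 'v" where
  "head G ori e = (if ori e then tgt G e else src G e)"

definition tail :: "('v, 'e) tcurve \<Rightarrow> ('e \<Rightarrow> bool) \<Rightarrow> 'e \<Rightarrow> 'v" where
  "tail G ori e = (if ori e then src G e else tgt G e)"

definition cyclic_orient :: "('v, 'e) tcurve \<Rightarrow> 'e set \<Rightarrow> ('e \<Rightarrow> bool) \<Rightarrow> bool" where
  "cyclic_orient G P ori \<longleftrightarrow>
     (\<forall>v \<in> verts G. card {e \<in> P. head G ori e = v} = card {e \<in> P. tail G ori e = v})"

definition GammaPW :: "('v, 'e) tcurve \<Rightarrow> 'e set \<Rightarrow> 'v set \<Rightarrow> ('v, 'e) point set" where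
  "GammaPW G P W = Vtx ` W \<union> {Vtx (src G e) | e. e \<in> P} \<union> {Vtx (tgt G e) | e. e \<in> P}
                   \<union> {Pt e t | e t. e \<in> P \<and> 0 < t \<and> t < len G e}"

definition dPW :: "('v, 'e) tcurve \<Rightarrow> 'e set \<Rightarrow> 'v set \<Rightarrow> ('v, 'e) point \<Rightarrow> real" where
  "dPW G P W p = Inf (tdist G p ` GammaPW G P W)"

definition nonlinear_at :: "(real \<Rightarrow> real) \<Rightarrow> real \<Rightarrow> bool" where
  "nonlinear_at h t \<longleftrightarrow> \<not> (\<exists>a b \<epsilon>. \<epsilon> > 0 \<and> (\<forall>s. \<bar>s - t\<bar> < \<epsilon> \<longrightarrow> h s = a * s + b))"

definition is_crit :: "('v, 'e) tcurve \<Rightarrow> 'e set \<Rightarrow> 'v set \<Rightarrow> 'e \<Rightarrow> real \<Rightarrow> bool" where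
  "is_crit G P W e t \<longleftrightarrow> 0 < t \<and> t < len G e \<and> nonlinear_at (\<lambda>s. dPW G P W (at_param G e s)) t"

definition has_crit :: "('v, 'e) tcurve \<Rightarrow> 'e set \<Rightarrow> 'v set \<Rightarrow> 'e \<Rightarrow> bool" where
  "has_crit G P W e \<longleftrightarrow> (\<exists>t. is_crit G P W e t)"

definition crit_pt :: "('v, 'e) tcurve \<Rightarrow> 'e set \<Rightarrow> 'v set \<Rightarrow> 'e \<Rightarrow> ('v, 'e) point" where
  "crit_pt G P W e = Pt e (SOME t. is_crit G P W e t)"

text \<open>Edges of the subdivision \<open>\<widehat>G_{P,W}\<close>: an edge without interior critical point stays whole,
  an edge with one is split into a lower and an upper piece.\<close>
datatype piece = Whole | Lo | Hi

definition sub_edges :: "('v, 'e) tcurve \<Rightarrow> 'e set \<Rightarrow> 'v set \<Rightarrow> ('e \<times> piece) set" where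
  "sub_edges G P W = {(e, Whole) | e. e \<in> edges G \<and> \<not> has_crit G P W e}
                   \<union> {(e, pc) | e pc. e \<in> edges G \<and> has_crit G P W e \<and> pc \<noteq> Whole}"

definition sub_verts :: "('v, 'e) tcurve \<Rightarrow> 'e set \<Rightarrow> 'v set \<Rightarrow> ('v, 'e) point set" where
  "sub_verts G P W = Vtx ` verts G \<union> {crit_pt G P W e | e. e \<in> edges G \<and> has_crit G P W e}"

fun ep1 :: "('v, 'e) tcurve \<Rightarrow> 'e set \<Rightarrow> 'v set \<Rightarrow> 'e \<times> piece \<Rightarrow> ('v, 'e) point" where
  "ep1 G P W (e, Hi) = crit_pt G P W e"
| "ep1 G P W (e, _) = Vtx (src G e)"

fun ep2 :: "('v, 'e) tcurve \<Rightarrow> 'e set \<Rightarrow> 'v set \<Rightarrow> 'e \<times> piece \<Rightarrow> ('v, 'e) point" where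
  "ep2 G P W (e, Lo) = crit_pt G P W e"
| "ep2 G P W (e, _) = Vtx (tgt G e)"

text \<open>Target of a subdivided edge under the sub-orientation O_{P,W}: edges of P are oriented by
  the cyclic orientation ori; every other edge (on which d_{P,W} is linear of slope +-1) is oriented
  in the direction in which d_{P,W} increases, i.e. towards its endpoint with larger d_{P,W}.\<close>
definition sub_target :: "('v, 'e) tcurve \<Rightarrow> 'e set \<Rightarrow> 'v set \<Rightarrow> ('e \<Rightarrow> bool) \<Rightarrow> 'e \<times> piece
                           \<Rightarrow> ('v, 'e) point" where
  "sub_target G P W ori x =
     (if fst x \<in> P then (if ori (fst x) then ep2 G P W x else ep1 G P W x)
      else (if dPW G P W (ep1 G P W x) \<le> dPW G P W (ep2 G P W x) then ep2 G P W x else ep1 G P W x))"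

definition indeg :: "('v, 'e) tcurve \<Rightarrow> 'e set \<Rightarrow> 'v set \<Rightarrow> ('e \<Rightarrow> bool) \<Rightarrow> ('v, 'e) point \<Rightarrow> int" where
  "indeg G P W ori p =
     (if p \<in> sub_verts G P W then int (card {x \<in> sub_edges G P W. sub_target G P W ori x = p}) else 1)"

definition wext :: "('v, 'e) tcurve \<Rightarrow> ('v, 'e) point \<Rightarrow> int" where
  "wext G p = (case p of Vtx v \<Rightarrow> int (wt G v) | Pt e t \<Rightarrow> 0)"

definition D_PW :: "('v, 'e) tcurve \<Rightarrow> 'e set \<Rightarrow> 'v set \<Rightarrow> ('e \<Rightarrow> bool) \<Rightarrow> ('v, 'e) divisor" where
  "D_PW G P W ori p = (if p \<in> points G then indeg G P W ori p - 1 + wext G p else 0)"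

end

theory Submission
  imports Defs
begin

text \<open>The distance \<open>d(P,W)\<close> to \<open>\<Gamma>(P,W)\<close> is a rational function with slopes \<open>0\<close> on \<open>P\<close> and
  \<open>\<plusminus>1\<close> elsewhere, and the sub-orientation \<open>O(P,W)\<close> points in the direction of increasing
  \<open>d(P,W)\<close>. Summing outgoing slopes at each point therefore gives
  \<open>ord d(P,W) = K - 2 D(P,W)\<close>, the cyclic orientation on \<open>P\<close> contributing nothing; this is (2).
  If \<open>P = P'\<close>, then \<open>d(P,W') - d(P,W)\<close> has even slopes, so half of it is a rational function of
  order \<open>D(P,W) - D(P,W')\<close>. Conversely, if \<open>D(P,W) - D(P',W') = ord f\<close>, then
  \<open>2 f + d(P,W) - d(P',W')\<close> has order zero everywhere, hence is constant by the maximum principle;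
  but on an edge lying in exactly one of \<open>P\<close> and \<open>P'\<close> its slope is odd.\<close>

section \<open>Piecewise affine functions on an interval\<close>

definition affine_on :: "real set \<Rightarrow> (real \<Rightarrow> real) \<Rightarrow> real \<Rightarrow> real \<Rightarrow> bool" where
  "affine_on S g a b \<longleftrightarrow> (\<exists>m\<in>S. \<exists>c. \<forall>s\<in>{a..b}. g s = m * s + c)"

inductive piecewise_affine :: "real set \<Rightarrow> (real \<Rightarrow> real) \<Rightarrow> real \<Rightarrow> real \<Rightarrow> bool" for S g where
  single: "a < b \<Longrightarrow> affine_on S g a b \<Longrightarrow> piecewise_affine S g a b"
| cons: "a < x \<Longrightarrow> affine_on S g a x \<Longrightarrow> piecewise_affine S g x b \<Longrightarrow> piecewise_affine S g a b"

lemma piecewise_affine_less: "piecewise_affine S g a b \<Longrightarrow> a < b"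
  by (induction rule: piecewise_affine.induct) auto

lemma affine_on_subinterval: "affine_on S g a b \<Longrightarrow> a \<le> a' \<Longrightarrow> b' \<le> b \<Longrightarrow> affine_on S g a' b'"
  unfolding affine_on_def by force

lemma piecewise_affine_mono:
  assumes "piecewise_affine S g a b" "S \<subseteq> S'"
  shows "piecewise_affine S' g a b"
proof -
  have "affine_on S' g x y" if "affine_on S g x y" for x y
    using that assms(2) unfolding affine_on_def by blast
  with assms(1) show ?thesis by (induction rule: piecewise_affine.induct) (auto intro: piecewise_affine.intros)
qed

lemma piecewise_affine_split:
  "piecewise_affine S g a b \<Longrightarrow> a < t \<Longrightarrow> t < b \<Longrightarrow> piecewise_affine S g a t \<and> piecewise_affine S g t b"
proof (induction arbitrary: t rule: piecewise_affine.induct)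
  case (single a b)
  then show ?case by (auto intro!: piecewise_affine.single elim: affine_on_subinterval)
next
  case (cons a x b)
  consider "t < x" | "t = x" | "x < t" by linarith
  then show ?case
  proof cases
    case 1
    have "affine_on S g a t" "affine_on S g t x" using 1 cons by (auto elim: affine_on_subinterval)
    then show ?thesis using 1 cons by (auto intro: piecewise_affine.single piecewise_affine.cons[of t x])
  qed (use cons in \<open>auto intro: piecewise_affine.intros\<close>)
qed

lemma piecewise_affine_append:
  "piecewise_affine S g a b \<Longrightarrow> piecewise_affine S g b c \<Longrightarrow> piecewise_affine S g a c"
  by (induction rule: piecewise_affine.induct) (auto intro: piecewise_affine.cons)

lemma affine_on_lincomb:
  assumes "affine_on S1 g1 a b" "affine_on S2 g2 a b" "\<forall>m1\<in>S1. \<forall>m2\<in>S2. c1 * m1 + c2 * m2 \<in> S"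
  shows "affine_on S (\<lambda>s. c1 * g1 s + c2 * g2 s) a b"
proof -
  obtain m1 d1 m2 d2 where "m1 \<in> S1" "m2 \<in> S2"
    "\<forall>s\<in>{a..b}. g1 s = m1 * s + d1" "\<forall>s\<in>{a..b}. g2 s = m2 * s + d2"
    using assms(1,2) unfolding affine_on_def by blast
  moreover have "c1 * m1 + c2 * m2 \<in> S" using assms(3) \<open>m1 \<in> S1\<close> \<open>m2 \<in> S2\<close> by blast
  ultimately show ?thesis unfolding affine_on_def
    by (intro bexI[of _ "c1 * m1 + c2 * m2"] exI[of _ "c1 * d1 + c2 * d2"]) (auto simp: algebra_simps)
qed

lemma piecewise_affine_lincomb_affine:
  assumes "affine_on S1 g1 a b" "piecewise_affine S2 g2 a b"
    and "\<forall>m1\<in>S1. \<forall>m2\<in>S2. c1 * m1 + c2 * m2 \<in> S"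
  shows "piecewise_affine S (\<lambda>s. c1 * g1 s + c2 * g2 s) a b"
  using assms(2,1)
proof (induction rule: piecewise_affine.induct)
  case (single a b)
  then show ?case using assms(3) by (auto intro: piecewise_affine.single affine_on_lincomb)
next
  case (cons a x b)
  have "x < b" using cons.hyps(3) piecewise_affine_less by blast
  then have "affine_on S1 g1 a x" "affine_on S1 g1 x b"
    using cons.prems cons.hyps(1) by (auto elim: affine_on_subinterval)
  then show ?case using cons assms(3) by (auto intro: piecewise_affine.cons affine_on_lincomb)
qed

lemma piecewise_affine_lincomb:
  assumes "piecewise_affine S1 g1 a b" "piecewise_affine S2 g2 a b"
    and "\<forall>m1\<in>S1. \<forall>m2\<in>S2. c1 * m1 + c2 * m2 \<in> S"
  shows "piecewise_affine S (\<lambda>s. c1 * g1 s + c2 * g2 s) a b"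
  using assms(1,2)
proof (induction rule: piecewise_affine.induct)
  case (single a b)
  then show ?case using piecewise_affine_lincomb_affine assms(3) by blast
next
  case (cons a x b)
  have "x < b" using cons.hyps(3) piecewise_affine_less by blast
  then have "piecewise_affine S2 g2 a x" "piecewise_affine S2 g2 x b"
    using piecewise_affine_split[OF cons.prems cons.hyps(1)] by auto
  then show ?case
    using cons piecewise_affine_lincomb_affine assms(3) piecewise_affine_append by metis
qed

lemma pw_linear_int_imp_piecewise_affine:
  assumes "length xs \<ge> 2" "sorted_wrt (<) xs" "hd xs = a" "last xs = b"
    "\<forall>i < length xs - 1. \<exists>m :: int. \<exists>c. \<forall>s \<in> {xs ! i .. xs ! (i + 1)}. g s = of_int m * s + c"
  shows "piecewise_affine \<int> g a b"
  using assms
proof (induction xs arbitrary: a)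
  case Nil
  then show ?case by simp
next
  case (Cons y ys)
  then obtain z zs where ys: "ys = z # zs" by (cases ys) auto
  have a: "a = y" and yz: "y < z" using Cons.prems(2,3) ys by auto
  have first: "affine_on \<int> g y z"
    using Cons.prems(5)[rule_format, of 0] ys unfolding affine_on_def by (auto simp: Ints_def)
  show ?case
  proof (cases zs)
    case Nil
    then show ?thesis using Cons.prems ys a yz first by (auto intro: piecewise_affine.single)
  next
    case (Cons w ws)
    have "piecewise_affine \<int> g z b"
    proof (rule Cons.IH)
      show "\<forall>i<length ys - 1. \<exists>m::int. \<exists>c. \<forall>s\<in>{ys ! i..ys ! (i + 1)}. g s = of_int m * s + c"
      proof (intro allI impI)
        fix i assume "i < length ys - 1"
        then show "\<exists>m::int. \<exists>c. \<forall>s\<in>{ys ! i..ys ! (i + 1)}. g s = of_int m * s + c"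
          using Cons.prems(5)[rule_format, of "Suc i"] by simp
      qed
    qed (use Cons.prems ys \<open>zs = w # ws\<close> in auto)
    then show ?thesis using a yz first by (auto intro: piecewise_affine.cons)
  qed
qed

lemma piecewise_affine_imp_pw_linear_int:
  assumes "piecewise_affine \<int> g a b"
  shows "\<exists>xs. length xs \<ge> 2 \<and> sorted_wrt (<) xs \<and> hd xs = a \<and> last xs = b \<and>
     (\<forall>i < length xs - 1. \<exists>m :: int. \<exists>c. \<forall>s \<in> {xs ! i .. xs ! (i + 1)}. g s = of_int m * s + c)"
  using assms
proof (induction rule: piecewise_affine.induct)
  case (single a b)
  then obtain k :: int and c where "\<forall>s\<in>{a..b}. g s = of_int k * s + c"
    unfolding affine_on_def by (auto elim!: Ints_cases)
  then show ?case using single by (intro exI[of _ "[a, b]"]) auto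
next
  case (cons a x b)
  then obtain xs where xs: "length xs \<ge> 2" "sorted_wrt (<) xs" "hd xs = x" "last xs = b"
    "\<forall>i < length xs - 1. \<exists>m :: int. \<exists>c. \<forall>s \<in> {xs ! i .. xs ! (i + 1)}. g s = of_int m * s + c"
    by blast
  obtain k :: int and c where k: "\<forall>s\<in>{a..x}. g s = of_int k * s + c"
    using cons unfolding affine_on_def by (auto elim!: Ints_cases)
  obtain ys where xs0: "xs = x # ys" using xs(1,3) by (cases xs) auto
  show ?case
  proof (intro exI[of _ "a # xs"] conjI allI impI)
    show "sorted_wrt (<) (a # xs)" using xs(2) xs0 cons(1) by (auto intro: less_trans)
    fix i assume i: "i < length (a # xs) - 1"
    show "\<exists>m::int. \<exists>c. \<forall>s\<in>{(a # xs) ! i..(a # xs) ! (i + 1)}. g s = of_int m * s + c"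
      using xs(5) i k xs0 by (cases i) auto
  qed (use xs xs0 in auto)
qed

lemma pw_linear_int_iff: "pw_linear_int g a b \<longleftrightarrow> piecewise_affine \<int> g a b"
  unfolding pw_linear_int_def
  using pw_linear_int_imp_piecewise_affine piecewise_affine_imp_pw_linear_int by blast

definition affine_right :: "(real \<Rightarrow> real) \<Rightarrow> real \<Rightarrow> real \<Rightarrow> bool" where
  "affine_right g x m \<longleftrightarrow> (\<exists>\<delta>>0. \<exists>c. \<forall>y\<in>{x..x+\<delta>}. g y = m * y + c)"

definition affine_left :: "(real \<Rightarrow> real) \<Rightarrow> real \<Rightarrow> real \<Rightarrow> bool" where
  "affine_left g x m \<longleftrightarrow> (\<exists>\<delta>>0. \<exists>c. \<forall>y\<in>{x-\<delta>..x}. g y = m * y + c)"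

lemma rslope_eq:
  assumes "affine_right g x m"
  shows "rslope g x = m"
proof -
  obtain \<delta> c where "\<delta> > 0" and lin: "\<forall>y\<in>{x..x+\<delta>}. g y = m * y + c"
    using assms unfolding affine_right_def by auto
  have "eventually (\<lambda>y. m * y + c = g y) (at_right x)"
    unfolding eventually_at_right_field using \<open>\<delta> > 0\<close> lin by (intro exI[of _ "x + \<delta>"]) auto
  moreover have "m * x + c = g x" using lin \<open>\<delta> > 0\<close> by auto
  moreover have "((\<lambda>y. m * y + c) has_real_derivative m) (at_right x)"
    by (auto intro!: derivative_eq_intros)
  ultimately have "(g has_real_derivative m) (at_right x)"
    using has_field_derivative_cong_eventually[of "\<lambda>y. m * y + c" g x] by metis
  then show ?thesis
    unfolding rslope_def using has_field_derivative_unique trivial_limit_at_right_real by blast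
qed

lemma lslope_eq:
  assumes "affine_left g x m"
  shows "lslope g x = m"
proof -
  obtain \<delta> c where "\<delta> > 0" and lin: "\<forall>y\<in>{x-\<delta>..x}. g y = m * y + c"
    using assms unfolding affine_left_def by auto
  have "eventually (\<lambda>y. m * y + c = g y) (at_left x)"
    unfolding eventually_at_left_field using \<open>\<delta> > 0\<close> lin by (intro exI[of _ "x - \<delta>"]) auto
  moreover have "m * x + c = g x" using lin \<open>\<delta> > 0\<close> by auto
  moreover have "((\<lambda>y. m * y + c) has_real_derivative m) (at_left x)"
    by (auto intro!: derivative_eq_intros)
  ultimately have "(g has_real_derivative m) (at_left x)"
    using has_field_derivative_cong_eventually[of "\<lambda>y. m * y + c" g x] by metis
  then show ?thesis
    unfolding lslope_def using has_field_derivative_unique trivial_limit_at_left_real by blast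
qed

lemma affine_right_of_affine:
  "\<forall>s\<in>{a..b}. g s = m * s + c \<Longrightarrow> a \<le> t \<Longrightarrow> t < b \<Longrightarrow> affine_right g t m"
  unfolding affine_right_def by (intro exI[of _ "b - t"] conjI exI[of _ c]) auto

lemma affine_left_of_affine:
  "\<forall>s\<in>{a..b}. g s = m * s + c \<Longrightarrow> a < t \<Longrightarrow> t \<le> b \<Longrightarrow> affine_left g t m"
  unfolding affine_left_def by (intro exI[of _ "t - a"] conjI exI[of _ c]) auto

lemma affine_right_lincomb:
  assumes "affine_right g1 x m1" "affine_right g2 x m2"
  shows "affine_right (\<lambda>y. c1 * g1 y + c2 * g2 y) x (c1 * m1 + c2 * m2)"
proof -
  obtain d1 a1 d2 a2 where "d1 > 0" "\<forall>y\<in>{x..x+d1}. g1 y = m1 * y + a1"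
    "d2 > 0" "\<forall>y\<in>{x..x+d2}. g2 y = m2 * y + a2" using assms unfolding affine_right_def by blast
  then show ?thesis unfolding affine_right_def
    by (intro exI[of _ "min d1 d2"] conjI exI[of _ "c1 * a1 + c2 * a2"]) (auto simp: algebra_simps)
qed

lemma affine_left_lincomb:
  assumes "affine_left g1 x m1" "affine_left g2 x m2"
  shows "affine_left (\<lambda>y. c1 * g1 y + c2 * g2 y) x (c1 * m1 + c2 * m2)"
proof -
  obtain d1 a1 d2 a2 where "d1 > 0" "\<forall>y\<in>{x-d1..x}. g1 y = m1 * y + a1"
    "d2 > 0" "\<forall>y\<in>{x-d2..x}. g2 y = m2 * y + a2" using assms unfolding affine_left_def by blast
  then show ?thesis unfolding affine_left_def
    by (intro exI[of _ "min d1 d2"] conjI exI[of _ "c1 * a1 + c2 * a2"]) (auto simp: algebra_simps)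
qed

lemma piecewise_affine_affine_right:
  "piecewise_affine S g a b \<Longrightarrow> a \<le> x \<Longrightarrow> x < b \<Longrightarrow> \<exists>m\<in>S. affine_right g x m"
proof (induction rule: piecewise_affine.induct)
  case (single a b)
  then show ?case unfolding affine_on_def using affine_right_of_affine by blast
next
  case (cons a y b)
  show ?case
  proof (cases "x < y")
    case True
    then show ?thesis using cons unfolding affine_on_def using affine_right_of_affine by blast
  qed (use cons in auto)
qed

lemma piecewise_affine_affine_left:
  "piecewise_affine S g a b \<Longrightarrow> a < x \<Longrightarrow> x \<le> b \<Longrightarrow> \<exists>m\<in>S. affine_left g x m"
proof (induction rule: piecewise_affine.induct)
  case (single a b)
  then show ?case unfolding affine_on_def using affine_left_of_affine by blast
next
  case (cons a y b)
  show ?case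
  proof (cases "x \<le> y")
    case True
    then show ?thesis using cons unfolding affine_on_def using affine_left_of_affine by blast
  qed (use cons in auto)
qed

lemma piecewise_affine_without_kinks:
  assumes "piecewise_affine S g a b" "\<And>t. a < t \<Longrightarrow> t < b \<Longrightarrow> rslope g t = lslope g t"
  shows "\<exists>m c. \<forall>s\<in>{a..b}. g s = m * s + c"
  using assms
proof (induction rule: piecewise_affine.induct)
  case (single a b)
  then show ?case unfolding affine_on_def by blast
next
  case (cons a x b)
  have "x < b" using cons.hyps(3) piecewise_affine_less by blast
  obtain m c where right: "\<forall>s\<in>{x..b}. g s = m * s + c" using cons by auto
  obtain m' c' where left: "\<forall>s\<in>{a..x}. g s = m' * s + c'"
    using cons.hyps(2) unfolding affine_on_def by blast
  have "m = m'"
    using cons.prems[of x] cons.hyps(1) \<open>x < b\<close>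
      rslope_eq[OF affine_right_of_affine[OF right]] lslope_eq[OF affine_left_of_affine[OF left]]
    by auto
  moreover have "m * x + c = m' * x + c'"
    using right[rule_format, of x] left[rule_format, of x] cons.hyps(1) \<open>x < b\<close> by auto
  ultimately have "g s = m * s + c" if "s \<in> {a..b}" for s
    using that right left by (cases "s \<le> x") auto
  then show ?case by blast
qed

section \<open>Distances on a tropical curve\<close>

lemma finite_ends: "finite (ends G p)"
  by (cases p) auto

lemma tdist_candidates_finite:
  "finite ({x + vdist G a b + y | a x b y. (a, x) \<in> ends G p \<and> (b, y) \<in> ends G q}
           \<union> same_edge_dist p q)"
proof -
  have "{x + vdist G a b + y | a x b y. (a, x) \<in> ends G p \<and> (b, y) \<in> ends G q}
        \<subseteq> (\<lambda>((a, x), (b, y)). x + vdist G a b + y) ` (ends G p \<times> ends G q)"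
    by force
  moreover have "finite (same_edge_dist p q)"
    by (cases "(p, q)" rule: same_edge_dist.cases) auto
  moreover have "finite ((\<lambda>((a, x), (b, y)). x + vdist G a b + y) ` (ends G p \<times> ends G q))"
    using finite_ends by blast
  ultimately show ?thesis by (meson finite_UnI finite_subset)
qed

lemma tdist_le_ends:
  assumes "(a, x) \<in> ends G p" "(b, y) \<in> ends G q"
  shows "tdist G p q \<le> x + vdist G a b + y"
  unfolding tdist_def using assms by (intro Min_le[OF tdist_candidates_finite]) blast

lemma tdist_le_same_edge: "z \<in> same_edge_dist p q \<Longrightarrow> tdist G p q \<le> z"
  unfolding tdist_def by (intro Min_le[OF tdist_candidates_finite]) blast

lemma tdist_cases:
  obtains a x b y where "(a, x) \<in> ends G p" "(b, y) \<in> ends G q" "tdist G p q = x + vdist G a b + y"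
  | "tdist G p q \<in> same_edge_dist p q"
proof -
  obtain a x b y where "(a, x) \<in> ends G p" "(b, y) \<in> ends G q"
    by (cases p; cases q) auto
  then have "tdist G p q \<in> {x + vdist G a b + y | a x b y. (a, x) \<in> ends G p \<and> (b, y) \<in> ends G q}
                          \<union> same_edge_dist p q"
    unfolding tdist_def by (intro Min_in[OF tdist_candidates_finite]) blast
  then show ?thesis using that by blast
qed

lemma tdist_Vtx_cases:
  obtains b y where "(b, y) \<in> ends G q" "tdist G (Vtx u) q = vdist G u b + y"
  by (rule tdist_cases[of G "Vtx u" q]) auto

lemma tdist_Pt:
  assumes "same_edge_dist (Pt e s) q = {}"
  shows "tdist G (Pt e s) q
       = min (s + tdist G (Vtx (src G e)) q) (len G e - s + tdist G (Vtx (tgt G e)) q)"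
proof (rule antisym)
  obtain b y where "(b, y) \<in> ends G q" "tdist G (Vtx (src G e)) q = vdist G (src G e) b + y"
    by (rule tdist_Vtx_cases)
  then have "tdist G (Pt e s) q \<le> s + tdist G (Vtx (src G e)) q"
    using tdist_le_ends[of "src G e" s G "Pt e s"] by fastforce
  moreover obtain b' y' where "(b', y') \<in> ends G q"
    "tdist G (Vtx (tgt G e)) q = vdist G (tgt G e) b' + y'"
    by (rule tdist_Vtx_cases)
  then have "tdist G (Pt e s) q \<le> len G e - s + tdist G (Vtx (tgt G e)) q"
    using tdist_le_ends[of "tgt G e" "len G e - s" G "Pt e s"] by fastforce
  ultimately show "tdist G (Pt e s) q \<le> min (s + tdist G (Vtx (src G e)) q) (len G e - s + tdist G (Vtx (tgt G e)) q)"
    by simp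
next
  show "min (s + tdist G (Vtx (src G e)) q) (len G e - s + tdist G (Vtx (tgt G e)) q) \<le> tdist G (Pt e s) q"
  proof (rule tdist_cases[of G "Pt e s" q])
    fix a x b y assume "(a, x) \<in> ends G (Pt e s)" "(b, y) \<in> ends G q" "tdist G (Pt e s) q = x + vdist G a b + y"
    then show ?thesis using tdist_le_ends[of a 0 G "Vtx a" b y q] by auto
  qed (use assms in auto)
qed

lemma not_nonlinear_at_affine:
  assumes "\<epsilon> > 0" "\<forall>s. \<bar>s - t\<bar> < \<epsilon> \<longrightarrow> h s = a * s + b"
  shows "\<not> nonlinear_at h t"
  unfolding nonlinear_at_def using assms by blast

lemma nonlinear_at_tent:
  assumes "\<epsilon> > 0" and tent: "\<forall>s. \<bar>s - t\<bar> < \<epsilon> \<longrightarrow> h s = min (s + a) (b - s)"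
  shows "nonlinear_at h t \<longleftrightarrow> t + a = b - t"
proof
  assume "nonlinear_at h t"
  show "t + a = b - t"
  proof (rule ccontr)
    assume "t + a \<noteq> b - t"
    define \<delta> where "\<delta> = min \<epsilon> (\<bar>(b - t) - (t + a)\<bar> / 2)"
    have "\<delta> > 0" using \<open>\<epsilon> > 0\<close> \<open>t + a \<noteq> b - t\<close> unfolding \<delta>_def by auto
    then consider "\<forall>s. \<bar>s - t\<bar> < \<delta> \<longrightarrow> h s = 1 * s + a" | "\<forall>s. \<bar>s - t\<bar> < \<delta> \<longrightarrow> h s = (-1) * s + b"
      using tent unfolding \<delta>_def by (cases "t + a < b - t") (auto simp: min_def abs_less_iff)
    then show False using \<open>\<delta> > 0\<close> \<open>nonlinear_at h t\<close> not_nonlinear_at_affine by metis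
  qed
next
  assume crossing: "t + a = b - t"
  show "nonlinear_at h t" unfolding nonlinear_at_def
  proof
    assume "\<exists>\<alpha> \<beta> \<epsilon>'. \<epsilon>' > 0 \<and> (\<forall>s. \<bar>s - t\<bar> < \<epsilon>' \<longrightarrow> h s = \<alpha> * s + \<beta>)"
    then obtain \<alpha> \<beta> \<epsilon>' where "\<epsilon>' > 0" and lin: "\<forall>s. \<bar>s - t\<bar> < \<epsilon>' \<longrightarrow> h s = \<alpha> * s + \<beta>"
      by blast
    define \<delta> where "\<delta> = min \<epsilon> \<epsilon>' / 2"
    have \<delta>: "0 < \<delta>" "\<delta> < \<epsilon>" "\<delta> < \<epsilon>'" using \<open>\<epsilon> > 0\<close> \<open>\<epsilon>' > 0\<close> unfolding \<delta>_def by auto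
    have "h (t - \<delta>) + h (t + \<delta>) = 2 * h t" using lin \<delta> by (auto simp: algebra_simps)
    moreover have "h (t - \<delta>) = t - \<delta> + a" "h t = t + a" "h (t + \<delta>) = t + a - \<delta>"
      using tent \<delta> crossing by auto
    ultimately show False using \<delta>(1) by simp
  qed
qed

lemma cINF_min_add:
  fixes F H :: "'a \<Rightarrow> real"
  assumes "A \<noteq> {}" "\<And>q. q \<in> A \<Longrightarrow> F q \<ge> 0" "\<And>q. q \<in> A \<Longrightarrow> H q \<ge> 0"
  shows "(INF q\<in>A. min (c + F q) (d + H q)) = min (c + (INF q\<in>A. F q)) (d + (INF q\<in>A. H q))"
proof -
  let ?M = "\<lambda>q. min (c + F q) (d + H q)"
  have bddF: "bdd_below (F ` A)" and bddH: "bdd_below (H ` A)"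
    using assms(2,3) unfolding bdd_below_def by auto
  have bddM: "bdd_below (?M ` A)"
    unfolding bdd_below_def using assms(2,3) by (intro exI[of _ "min c d"]) (force simp: min_def)
  have "(INF q\<in>A. ?M q) - c \<le> (INF q\<in>A. F q)"
    using assms(1)
  proof (rule cINF_greatest)
    fix q assume "q \<in> A"
    then show "(INF q\<in>A. ?M q) - c \<le> F q" using cINF_lower[OF bddM, of q] by linarith
  qed
  moreover have "(INF q\<in>A. ?M q) - d \<le> (INF q\<in>A. H q)"
    using assms(1)
  proof (rule cINF_greatest)
    fix q assume "q \<in> A"
    then show "(INF q\<in>A. ?M q) - d \<le> H q" using cINF_lower[OF bddM, of q] by linarith
  qed
  moreover have "min (c + (INF q\<in>A. F q)) (d + (INF q\<in>A. H q)) \<le> (INF q\<in>A. ?M q)"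
    using assms(1)
  proof (rule cINF_greatest)
    fix q assume "q \<in> A"
    then show "min (c + (INF q\<in>A. F q)) (d + (INF q\<in>A. H q)) \<le> ?M q"
      using cINF_lower[OF bddF, of q] cINF_lower[OF bddH, of q] by linarith
  qed
  ultimately show ?thesis by linarith
qed

lemma walk_len_Nil [simp]: "walk_len G [] = 0"
  by (simp add: walk_len_def)

lemma walk_len_Cons [simp]: "walk_len G ((e, b) # es) = len G e + walk_len G es"
  by (simp add: walk_len_def)

lemma Pt_in_points_iff [simp]: "Pt e t \<in> points G \<longleftrightarrow> e \<in> edges G \<and> 0 < t \<and> t < len G e"
  unfolding points_def by auto

lemma Vtx_in_points_iff [simp]: "Vtx v \<in> points G \<longleftrightarrow> v \<in> verts G"
  unfolding points_def by auto

locale trop_curve =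
  fixes G :: "('v, 'e) tcurve"
  assumes tropical: "tropical_curve G"
begin

abbreviation "V \<equiv> verts G"
abbreviation "E \<equiv> edges G"
abbreviation "L \<equiv> len G"

lemma finite_verts: "finite V" and finite_edges: "finite E" and verts_nonempty: "V \<noteq> {}"
  using tropical unfolding tropical_curve_def by auto

lemma src_in_verts: "e \<in> E \<Longrightarrow> src G e \<in> V" and tgt_in_verts: "e \<in> E \<Longrightarrow> tgt G e \<in> V"
  and len_pos: "e \<in> E \<Longrightarrow> L e > 0"
  using tropical unfolding tropical_curve_def by auto

lemma walk_exists: "u \<in> V \<Longrightarrow> v \<in> V \<Longrightarrow> \<exists>es. walk G u es v"
  using tropical unfolding tropical_curve_def by auto

lemma walk_len_nonneg: "walk G u es v \<Longrightarrow> walk_len G es \<ge> 0"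
proof (induction es arbitrary: u)
  case (Cons x es)
  then show ?case using len_pos by (cases x; cases "snd x") (auto intro: add_nonneg_nonneg less_imp_le)
qed simp

lemma vdist_le: "walk G u es v \<Longrightarrow> vdist G u v \<le> walk_len G es"
  unfolding vdist_def using walk_len_nonneg by (intro cInf_lower) (auto simp: bdd_below_def)

lemma vdist_nonneg: "u \<in> V \<Longrightarrow> v \<in> V \<Longrightarrow> vdist G u v \<ge> 0"
  unfolding vdist_def using walk_exists walk_len_nonneg by (intro cInf_greatest) auto

lemma vdist_refl: "v \<in> V \<Longrightarrow> vdist G v v = 0"
  using vdist_le[of v "[]" v] vdist_nonneg[of v v] by simp

lemma vdist_along_edge:
  assumes "walk G u [(e, b)] u'" "v \<in> V"
  shows "vdist G u v \<le> L e + vdist G u' v"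
proof -
  have "u \<in> V" "u' \<in> V" using assms(1) src_in_verts tgt_in_verts by (cases b; auto)+
  have "vdist G u v - L e \<le> vdist G u' v"
    unfolding vdist_def[of G u']
  proof (rule cInf_greatest)
    show "{walk_len G es |es. walk G u' es v} \<noteq> {}" using walk_exists \<open>u' \<in> V\<close> assms(2) by auto
    fix z assume "z \<in> {walk_len G es |es. walk G u' es v}"
    then obtain es where "walk G u' es v" "z = walk_len G es" by auto
    then have "walk G u ((e, b) # es) v" using assms(1) by (cases b) auto
    then show "vdist G u v - L e \<le> z" using vdist_le \<open>z = walk_len G es\<close> by fastforce
  qed
  then show ?thesis by simp
qed

lemma ends_in_verts: "p \<in> points G \<Longrightarrow> (b, y) \<in> ends G p \<Longrightarrow> b \<in> V \<and> 0 \<le> y"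
  unfolding points_def using src_in_verts tgt_in_verts by auto

lemma tdist_nonneg:
  assumes "p \<in> points G" "q \<in> points G"
  shows "tdist G p q \<ge> 0"
proof (rule tdist_cases[of G p q])
  fix a x b y assume "(a, x) \<in> ends G p" "(b, y) \<in> ends G q" "tdist G p q = x + vdist G a b + y"
  then show ?thesis using assms ends_in_verts vdist_nonneg by fastforce
next
  assume "tdist G p q \<in> same_edge_dist p q"
  then show ?thesis by (cases "(p, q)" rule: same_edge_dist.cases) (auto split: if_splits)
qed

lemma tdist_self:
  assumes "p \<in> points G"
  shows "tdist G p p = 0"
proof -
  have "tdist G p p \<le> 0"
  proof (cases p)
    case (Vtx v)
    then show ?thesis using tdist_le_ends[of v 0 G p v 0 p] vdist_refl assms by auto
  next
    case (Pt e t)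
    then show ?thesis using tdist_le_same_edge[of 0 p p G] by auto
  qed
  then show ?thesis using tdist_nonneg[OF assms assms] by linarith
qed

lemma tdist_Vtx_along_edge:
  assumes "e \<in> E" "q \<in> points G"
  shows "tdist G (Vtx (src G e)) q \<le> L e + tdist G (Vtx (tgt G e)) q"
    and "tdist G (Vtx (tgt G e)) q \<le> L e + tdist G (Vtx (src G e)) q"
proof -
  have step: "tdist G (Vtx u) q \<le> L e + tdist G (Vtx u') q" if "walk G u [(e, b)] u'" for u u' b
  proof -
    obtain c y where c: "(c, y) \<in> ends G q" "tdist G (Vtx u') q = vdist G u' c + y"
      by (rule tdist_Vtx_cases)
    then have "vdist G u c \<le> L e + vdist G u' c"
      using vdist_along_edge[OF that] ends_in_verts assms(2) by blast
    then show ?thesis using tdist_le_ends[of u 0 G "Vtx u" c y q] c by auto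
  qed
  show "tdist G (Vtx (src G e)) q \<le> L e + tdist G (Vtx (tgt G e)) q"
    using step[of "src G e" True "tgt G e"] assms(1) by simp
  show "tdist G (Vtx (tgt G e)) q \<le> L e + tdist G (Vtx (src G e)) q"
    using step[of "tgt G e" False "src G e"] assms(1) by simp
qed

section \<open>Rational functions and the maximum principle\<close>

definition edgewise_piecewise_affine :: "(('v, 'e) point \<Rightarrow> real) \<Rightarrow> bool" where
  "edgewise_piecewise_affine F \<longleftrightarrow> (\<forall>e\<in>E. piecewise_affine UNIV (\<lambda>s. F (at_param G e s)) 0 (L e))"

lemma edgewise_piecewise_affine_lincomb:
  assumes "edgewise_piecewise_affine F1" "edgewise_piecewise_affine F2"
  shows "edgewise_piecewise_affine (\<lambda>q. c1 * F1 q + c2 * F2 q)"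
  using assms piecewise_affine_lincomb[where S = UNIV]
  unfolding edgewise_piecewise_affine_def by blast

lemma rslope_lincomb:
  assumes "edgewise_piecewise_affine F1" "edgewise_piecewise_affine F2" "e \<in> E" "0 \<le> t" "t < L e"
  shows "rslope (\<lambda>s. c1 * F1 (at_param G e s) + c2 * F2 (at_param G e s)) t
       = c1 * rslope (\<lambda>s. F1 (at_param G e s)) t + c2 * rslope (\<lambda>s. F2 (at_param G e s)) t"
proof -
  obtain m1 m2 where r1: "affine_right (\<lambda>s. F1 (at_param G e s)) t m1"
    and r2: "affine_right (\<lambda>s. F2 (at_param G e s)) t m2"
    using assms piecewise_affine_affine_right unfolding edgewise_piecewise_affine_def by blast
  show ?thesis using rslope_eq[OF affine_right_lincomb[OF r1 r2]] rslope_eq[OF r1] rslope_eq[OF r2] by simp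
qed

lemma lslope_lincomb:
  assumes "edgewise_piecewise_affine F1" "edgewise_piecewise_affine F2" "e \<in> E" "0 < t" "t \<le> L e"
  shows "lslope (\<lambda>s. c1 * F1 (at_param G e s) + c2 * F2 (at_param G e s)) t
       = c1 * lslope (\<lambda>s. F1 (at_param G e s)) t + c2 * lslope (\<lambda>s. F2 (at_param G e s)) t"
proof -
  obtain m1 m2 where l1: "affine_left (\<lambda>s. F1 (at_param G e s)) t m1"
    and l2: "affine_left (\<lambda>s. F2 (at_param G e s)) t m2"
    using assms piecewise_affine_affine_left unfolding edgewise_piecewise_affine_def by blast
  show ?thesis using lslope_eq[OF affine_left_lincomb[OF l1 l2]] lslope_eq[OF l1] lslope_eq[OF l2] by simp
qed

lemma ord_at_lincomb:
  assumes "edgewise_piecewise_affine F1" "edgewise_piecewise_affine F2" "p \<in> points G"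
  shows "ord_at G (\<lambda>q. c1 * F1 q + c2 * F2 q) p = c1 * ord_at G F1 p + c2 * ord_at G F2 p"
proof (cases p)
  case (Vtx v)
  have r: "rslope (\<lambda>s. c1 * F1 (at_param G e s) + c2 * F2 (at_param G e s)) 0
      = c1 * rslope (\<lambda>s. F1 (at_param G e s)) 0 + c2 * rslope (\<lambda>s. F2 (at_param G e s)) 0"
    if "e \<in> {e \<in> E. src G e = v}" for e
    using rslope_lincomb[OF assms(1,2)] that len_pos by auto
  have l: "- lslope (\<lambda>s. c1 * F1 (at_param G e s) + c2 * F2 (at_param G e s)) (L e)
      = c1 * - lslope (\<lambda>s. F1 (at_param G e s)) (L e) + c2 * - lslope (\<lambda>s. F2 (at_param G e s)) (L e)"
    if "e \<in> {e \<in> E. tgt G e = v}" for e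
    using lslope_lincomb[OF assms(1,2)] that len_pos by auto
  show ?thesis
    unfolding Vtx ord_at.simps
    by (simp only: sum.cong[OF refl r] sum.cong[OF refl l] sum.distrib sum_distrib_left[symmetric] algebra_simps)
next
  case (Pt e t)
  then show ?thesis using assms(3) rslope_lincomb[OF assms(1,2)] lslope_lincomb[OF assms(1,2)]
    by (simp add: algebra_simps)
qed

lemma rational_fun_edgewise_piecewise_affine:
  "rational_fun G f \<Longrightarrow> edgewise_piecewise_affine f"
  unfolding rational_fun_def pw_linear_int_iff edgewise_piecewise_affine_def
  by (blast intro: piecewise_affine_mono)

lemma rational_fun_rslope_Ints:
  assumes "rational_fun G f" "e \<in> E"
  shows "rslope (\<lambda>s. f (at_param G e s)) 0 \<in> \<int>"
proof -
  have "piecewise_affine \<int> (\<lambda>s. f (at_param G e s)) 0 (L e)"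
    using assms unfolding rational_fun_def pw_linear_int_iff by blast
  then obtain m where "m \<in> \<int>" "affine_right (\<lambda>s. f (at_param G e s)) 0 m"
    using piecewise_affine_affine_right len_pos[OF assms(2)] by blast
  then show ?thesis using rslope_eq by simp
qed

lemma rational_fun_lincomb:
  assumes "\<And>e. e \<in> E \<Longrightarrow> piecewise_affine (S e) (\<lambda>s. F1 (at_param G e s)) 0 (L e)"
    and "\<And>e. e \<in> E \<Longrightarrow> piecewise_affine (T e) (\<lambda>s. F2 (at_param G e s)) 0 (L e)"
    and "\<And>e. e \<in> E \<Longrightarrow> \<forall>m1\<in>S e. \<forall>m2\<in>T e. c1 * m1 + c2 * m2 \<in> \<int>"
  shows "rational_fun G (\<lambda>q. c1 * F1 q + c2 * F2 q)"
  unfolding rational_fun_def pw_linear_int_iff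
proof
  fix e assume "e \<in> E"
  from piecewise_affine_lincomb[OF assms(1,2,3)[OF this]]
  show "piecewise_affine \<int> (\<lambda>s. c1 * F1 (at_param G e s) + c2 * F2 (at_param G e s)) 0 (L e)" .
qed

lemma harmonic_max_slopes_zero:
  assumes diff: "\<And>e. e \<in> E \<Longrightarrow> h (tgt G e) - h (src G e) = m e * L e"
    and balanced: "(\<Sum>e\<in>{e \<in> E. src G e = u}. m e) = (\<Sum>e\<in>{e \<in> E. tgt G e = u}. m e)"
    and max: "\<forall>v\<in>V. h v \<le> h u"
  shows "\<forall>e\<in>E. src G e = u \<or> tgt G e = u \<longrightarrow> m e = 0"
proof -
  have out: "- m e \<ge> 0" if "e \<in> {e \<in> E. src G e = u}" for e
  proof -
    have "m e * L e \<le> 0" using that diff[of e] max tgt_in_verts[of e] by auto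
    then show ?thesis using len_pos[of e] that by (simp add: mult_le_0_iff)
  qed
  have inc: "m e \<ge> 0" if "e \<in> {e \<in> E. tgt G e = u}" for e
  proof -
    have "m e * L e \<ge> 0" using that diff[of e] max src_in_verts[of e] by auto
    then show ?thesis using len_pos[of e] that by (simp add: zero_le_mult_iff)
  qed
  have fin: "finite {e \<in> E. src G e = u}" "finite {e \<in> E. tgt G e = u}"
    using finite_edges by auto
  have "(\<Sum>e\<in>{e \<in> E. src G e = u}. - m e) \<ge> 0" "(\<Sum>e\<in>{e \<in> E. tgt G e = u}. m e) \<ge> 0"
    using out inc by (auto intro: sum_nonneg)
  then have "(\<Sum>e\<in>{e \<in> E. src G e = u}. - m e) = 0" "(\<Sum>e\<in>{e \<in> E. tgt G e = u}. m e) = 0"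
    using balanced by (simp_all add: sum_negf)
  moreover have "(\<Sum>e\<in>{e \<in> E. src G e = u}. - m e) = 0 \<longleftrightarrow> (\<forall>e\<in>{e \<in> E. src G e = u}. - m e = 0)"
    using fin(1) out by (rule sum_nonneg_eq_0_iff)
  moreover have "(\<Sum>e\<in>{e \<in> E. tgt G e = u}. m e) = 0 \<longleftrightarrow> (\<forall>e\<in>{e \<in> E. tgt G e = u}. m e = 0)"
    using fin(2) inc by (rule sum_nonneg_eq_0_iff)
  ultimately have "\<forall>e\<in>{e \<in> E. src G e = u}. - m e = 0" "\<forall>e\<in>{e \<in> E. tgt G e = u}. m e = 0"
    by simp_all
  then show ?thesis by auto
qed

text \<open>A maximum principle: vertices where \<open>h\<close> is maximal propagate along edges of slope zero,
  so by connectivity every edge is incident to such a vertex.\<close>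
lemma harmonic_slopes_zero:
  assumes diff: "\<And>e. e \<in> E \<Longrightarrow> h (tgt G e) - h (src G e) = m e * L e"
    and balanced: "\<And>v. v \<in> V \<Longrightarrow> (\<Sum>e\<in>{e \<in> E. src G e = v}. m e) = (\<Sum>e\<in>{e \<in> E. tgt G e = v}. m e)"
    and "e \<in> E"
  shows "m e = 0"
proof -
  define M where "M = Max (h ` V)"
  have below_M: "\<forall>v\<in>V. h v \<le> M" unfolding M_def using finite_verts by auto
  have "M \<in> h ` V" unfolding M_def using finite_verts verts_nonempty by simp
  then obtain u0 where u0: "u0 \<in> V" "h u0 = M" by auto
  have incident_zero: "\<forall>e\<in>E. src G e = u \<or> tgt G e = u \<longrightarrow> m e = 0" if "u \<in> V" "h u = M" for u
    using harmonic_max_slopes_zero[OF diff balanced[OF that(1)]] that below_M by simp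
  have "x \<in> V \<and> h x = M" if "walk G u es x" "u \<in> V" "h u = M" for u es x
    using that
  proof (induction es arbitrary: u)
    case (Cons a es)
    obtain e b where a: "a = (e, b)" by (cases a)
    show ?case
    proof (cases b)
      case True
      then have e: "e \<in> E" "src G e = u" "walk G (tgt G e) es x" using Cons.prems a by auto
      then have "h (tgt G e) = M" using incident_zero[OF Cons.prems(2,3)] diff[OF e(1)] Cons.prems(3) by simp
      then show ?thesis using Cons.IH[OF e(3)] tgt_in_verts[OF e(1)] by blast
    next
      case False
      then have e: "e \<in> E" "tgt G e = u" "walk G (src G e) es x" using Cons.prems a by auto
      then have "h (src G e) = M" using incident_zero[OF Cons.prems(2,3)] diff[OF e(1)] Cons.prems(3) by simp
      then show ?thesis using Cons.IH[OF e(3)] src_in_verts[OF e(1)] by blast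
    qed
  qed simp
  moreover obtain es where "walk G u0 es (src G e)" using walk_exists u0 src_in_verts \<open>e \<in> E\<close> by blast
  ultimately show "m e = 0" using incident_zero u0 \<open>e \<in> E\<close> by blast
qed

lemma ord_at_zero_rslope_zero:
  assumes "edgewise_piecewise_affine F" "\<forall>p\<in>points G. ord_at G F p = 0" "e \<in> E"
  shows "rslope (\<lambda>s. F (at_param G e s)) 0 = 0"
proof -
  define m where "m e = rslope (\<lambda>s. F (at_param G e s)) 0" for e
  have affine: "\<exists>c. \<forall>s\<in>{0..L e}. F (at_param G e s) = m e * s + c" if "e \<in> E" for e
  proof -
    have "piecewise_affine UNIV (\<lambda>s. F (at_param G e s)) 0 (L e)"
      using assms(1) that unfolding edgewise_piecewise_affine_def by blast
    moreover have "rslope (\<lambda>s. F (at_param G e s)) t = lslope (\<lambda>s. F (at_param G e s)) t"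
      if "0 < t" "t < L e" for t
      using assms(2)[rule_format, of "Pt e t"] \<open>e \<in> E\<close> that by simp
    ultimately obtain \<mu> c where lin: "\<forall>s\<in>{0..L e}. F (at_param G e s) = \<mu> * s + c"
      using piecewise_affine_without_kinks by blast
    moreover have "m e = \<mu>"
      unfolding m_def using rslope_eq[OF affine_right_of_affine[OF lin]] len_pos[OF that] by simp
    ultimately show ?thesis by blast
  qed
  have diff: "F (Vtx (tgt G e)) - F (Vtx (src G e)) = m e * L e" if e: "e \<in> E" for e
  proof -
    obtain c where c: "\<forall>s\<in>{0..L e}. F (at_param G e s) = m e * s + c" using affine[OF e] by blast
    show ?thesis using c[rule_format, of 0] c[rule_format, of "L e"] len_pos[OF e]
      by (simp add: at_param_def)
  qed
  have lslope: "lslope (\<lambda>s. F (at_param G e s)) (L e) = m e" if e: "e \<in> E" for e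
  proof -
    obtain c where c: "\<forall>s\<in>{0..L e}. F (at_param G e s) = m e * s + c" using affine[OF e] by blast
    show ?thesis using lslope_eq[OF affine_left_of_affine[OF c]] len_pos[OF e] by simp
  qed
  have "(\<Sum>e\<in>{e \<in> E. src G e = v}. m e) = (\<Sum>e\<in>{e \<in> E. tgt G e = v}. m e)" if "v \<in> V" for v
  proof -
    have "(\<Sum>e\<in>{e \<in> E. tgt G e = v}. - lslope (\<lambda>s. F (at_param G e s)) (L e))
        = - (\<Sum>e\<in>{e \<in> E. tgt G e = v}. m e)"
      using lslope by (simp add: sum_negf)
    moreover have "ord_at G F (Vtx v) = 0" using assms(2)[rule_format, of "Vtx v"] that by simp
    ultimately show ?thesis unfolding m_def by simp
  qed
  from harmonic_slopes_zero[of "\<lambda>v. F (Vtx v)" m, OF diff this assms(3)] show ?thesis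
    unfolding m_def .
qed

end

section \<open>The distance to \<open>\<Gamma>(P,W)\<close>\<close>

locale trop_curve_PW = trop_curve +
  fixes P and W
  assumes even: "even_subgraph G P" and W_verts: "W \<subseteq> V" and nonempty: "P \<noteq> {} \<or> W \<noteq> {}"
begin

abbreviation "\<Gamma> \<equiv> GammaPW G P W"
abbreviation "d \<equiv> dPW G P W"

lemma P_edges: "P \<subseteq> E"
  using even unfolding even_subgraph_def by auto

lemma GammaPW_points: "\<Gamma> \<subseteq> points G"
  using P_edges W_verts src_in_verts tgt_in_verts unfolding GammaPW_def points_def by blast

lemma GammaPW_nonempty: "\<Gamma> \<noteq> {}"
  using nonempty unfolding GammaPW_def by blast

lemma bdd_below_tdist_GammaPW: "p \<in> points G \<Longrightarrow> bdd_below (tdist G p ` \<Gamma>)"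
  unfolding bdd_below_def using GammaPW_points tdist_nonneg by blast

lemma dPW_nonneg: "p \<in> points G \<Longrightarrow> d p \<ge> 0"
  unfolding dPW_def using GammaPW_nonempty GammaPW_points tdist_nonneg by (intro cINF_greatest) auto

lemma dPW_GammaPW:
  assumes "p \<in> \<Gamma>"
  shows "d p = 0"
proof -
  have "p \<in> points G" using assms GammaPW_points by blast
  then have "d p \<le> tdist G p p"
    unfolding dPW_def using assms by (intro cINF_lower bdd_below_tdist_GammaPW)
  then show ?thesis using tdist_self dPW_nonneg \<open>p \<in> points G\<close> by fastforce
qed

lemma dPW_ends_of_P: "e \<in> P \<Longrightarrow> d (Vtx (src G e)) = 0 \<and> d (Vtx (tgt G e)) = 0"
  by (intro conjI dPW_GammaPW) (auto simp: GammaPW_def)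

lemma dPW_Vtx_along_edge:
  assumes "e \<in> E"
  shows "d (Vtx (src G e)) \<le> L e + d (Vtx (tgt G e))" "d (Vtx (tgt G e)) \<le> L e + d (Vtx (src G e))"
proof -
  have "d (Vtx u) - L e \<le> d (Vtx u')"
    if "u \<in> V" "u' \<in> V" "\<And>q. q \<in> points G \<Longrightarrow> tdist G (Vtx u) q \<le> L e + tdist G (Vtx u') q" for u u'
    unfolding dPW_def[of G P W "Vtx u'"] using GammaPW_nonempty
  proof (rule cINF_greatest)
    fix q assume "q \<in> \<Gamma>"
    then have "d (Vtx u) \<le> tdist G (Vtx u) q"
      unfolding dPW_def using bdd_below_tdist_GammaPW[of "Vtx u"] that(1) by (intro cINF_lower) auto
    then show "d (Vtx u) - L e \<le> tdist G (Vtx u') q"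
      using that(3) \<open>q \<in> \<Gamma>\<close> GammaPW_points by fastforce
  qed
  then show "d (Vtx (src G e)) \<le> L e + d (Vtx (tgt G e))" "d (Vtx (tgt G e)) \<le> L e + d (Vtx (src G e))"
    using tdist_Vtx_along_edge[OF assms] src_in_verts[OF assms] tgt_in_verts[OF assms] by fastforce+
qed

lemma dPW_Pt:
  assumes "e \<in> E" "e \<notin> P" "0 < s" "s < L e"
  shows "d (Pt e s) = min (s + d (Vtx (src G e))) (L e - s + d (Vtx (tgt G e)))"
proof -
  have "same_edge_dist (Pt e s) q = {}" if "q \<in> \<Gamma>" for q
    using that assms(2) unfolding GammaPW_def by (auto split: if_splits)
  then have "d (Pt e s) = (INF q\<in>\<Gamma>. min (s + tdist G (Vtx (src G e)) q) (L e - s + tdist G (Vtx (tgt G e)) q))"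
    unfolding dPW_def by (simp add: tdist_Pt)
  also have "\<dots> = min (s + d (Vtx (src G e))) (L e - s + d (Vtx (tgt G e)))"
    unfolding dPW_def using GammaPW_nonempty GammaPW_points src_in_verts tgt_in_verts assms(1)
    by (intro cINF_min_add) (auto intro: tdist_nonneg)
  finally show ?thesis .
qed

lemma dPW_at_param:
  assumes "e \<in> E" "0 \<le> s" "s \<le> L e"
  shows "d (at_param G e s) = (if e \<in> P then 0 else min (s + d (Vtx (src G e))) (L e - s + d (Vtx (tgt G e))))"
proof -
  consider "s = 0" | "s = L e" | "0 < s" "s < L e" using assms by linarith
  then show ?thesis
  proof cases
    case 1
    then show ?thesis using dPW_ends_of_P[of e] dPW_Vtx_along_edge[OF assms(1)]
      by (auto simp: at_param_def min_def)
  next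
    case 2
    then show ?thesis using dPW_ends_of_P[of e] dPW_Vtx_along_edge[OF assms(1)] len_pos[OF assms(1)]
      by (auto simp: at_param_def min_def)
  next
    case 3
    then show ?thesis using dPW_GammaPW[of "Pt e s"] dPW_Pt assms(1)
      by (auto simp: at_param_def GammaPW_def)
  qed
qed

definition crit_param where
  "crit_param e = (L e + d (Vtx (tgt G e)) - d (Vtx (src G e))) / 2"

lemma crit_param_bounds: "e \<in> E \<Longrightarrow> 0 \<le> crit_param e \<and> crit_param e \<le> L e"
  using dPW_Vtx_along_edge[of e] unfolding crit_param_def by auto

lemma dPW_on_P: "e \<in> P \<Longrightarrow> \<forall>s\<in>{0..L e}. d (at_param G e s) = 0 * s + 0"
  using dPW_at_param P_edges by auto

lemma dPW_below_crit:
  "e \<in> E \<Longrightarrow> e \<notin> P \<Longrightarrow> \<forall>s\<in>{0..crit_param e}. d (at_param G e s) = 1 * s + d (Vtx (src G e))"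
  using dPW_at_param crit_param_bounds unfolding crit_param_def by (force simp: min_def)

lemma dPW_above_crit:
  "e \<in> E \<Longrightarrow> e \<notin> P \<Longrightarrow> \<forall>s\<in>{crit_param e..L e}. d (at_param G e s) = (-1) * s + (L e + d (Vtx (tgt G e)))"
  using dPW_at_param crit_param_bounds unfolding crit_param_def by (force simp: min_def)

lemma is_crit_iff:
  assumes "e \<in> E"
  shows "is_crit G P W e t \<longleftrightarrow> e \<notin> P \<and> 0 < t \<and> t < L e \<and> t = crit_param e"
proof (cases "0 < t \<and> t < L e")
  case True
  define \<epsilon> where "\<epsilon> = min t (L e - t)"
  have "\<epsilon> > 0" using True unfolding \<epsilon>_def by simp
  have near: "\<forall>s. \<bar>s - t\<bar> < \<epsilon> \<longrightarrow> d (at_param G e s)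
      = (if e \<in> P then 0 else min (s + d (Vtx (src G e))) ((L e + d (Vtx (tgt G e))) - s))"
    using dPW_at_param[OF assms] unfolding \<epsilon>_def by (auto simp: abs_less_iff algebra_simps)
  show ?thesis
  proof (cases "e \<in> P")
    case True
    then show ?thesis
      using not_nonlinear_at_affine[OF \<open>\<epsilon> > 0\<close>, of t _ 0 0] near unfolding is_crit_def by simp
  next
    case False
    have "nonlinear_at (\<lambda>s. d (at_param G e s)) t
        \<longleftrightarrow> t + d (Vtx (src G e)) = (L e + d (Vtx (tgt G e))) - t"
      by (rule nonlinear_at_tent[OF \<open>\<epsilon> > 0\<close>]) (use near False in simp)
    then show ?thesis
      using False \<open>0 < t \<and> t < L e\<close> unfolding is_crit_def crit_param_def by (auto simp: field_simps)
  qed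
qed (auto simp: is_crit_def)

lemma has_crit_iff: "e \<in> E \<Longrightarrow> has_crit G P W e \<longleftrightarrow> e \<notin> P \<and> 0 < crit_param e \<and> crit_param e < L e"
  unfolding has_crit_def using is_crit_iff by auto

lemma crit_pt_eq: "e \<in> E \<Longrightarrow> has_crit G P W e \<Longrightarrow> crit_pt G P W e = Pt e (crit_param e)"
  unfolding crit_pt_def using is_crit_iff has_crit_iff by (metis (no_types, lifting) someI_ex)

definition slope_set where
  "slope_set e = (if e \<in> P then {0} else {-1, 1 :: real})"

lemma dPW_piecewise_affine:
  assumes "e \<in> E"
  shows "piecewise_affine (slope_set e) (\<lambda>s. d (at_param G e s)) 0 (L e)"
proof (cases "e \<in> P")
  case True
  then show ?thesis using dPW_on_P len_pos[OF assms]
    by (intro piecewise_affine.single) (auto simp: affine_on_def slope_set_def)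
next
  case False
  have below: "affine_on (slope_set e) (\<lambda>s. d (at_param G e s)) 0 (crit_param e)"
    using dPW_below_crit[OF assms False] False unfolding affine_on_def slope_set_def by force
  have above: "affine_on (slope_set e) (\<lambda>s. d (at_param G e s)) (crit_param e) (L e)"
    using dPW_above_crit[OF assms False] False unfolding affine_on_def slope_set_def by force
  consider "crit_param e = 0" | "crit_param e = L e" | "0 < crit_param e" "crit_param e < L e"
    using crit_param_bounds[OF assms] by linarith
  then show ?thesis
  proof cases
    case 1
    then show ?thesis using above len_pos[OF assms] by (auto intro: piecewise_affine.single)
  next
    case 2
    then show ?thesis using below len_pos[OF assms] by (auto intro: piecewise_affine.single)
  next
    case 3
    then show ?thesis using below above by (auto intro: piecewise_affine.cons piecewise_affine.single)
  qed
qed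

lemma edgewise_piecewise_affine_dPW: "edgewise_piecewise_affine d"
  unfolding edgewise_piecewise_affine_def using dPW_piecewise_affine by (blast intro: piecewise_affine_mono)

definition src_slope where
  "src_slope e = (if e \<in> P then 0 else if 0 < crit_param e then 1 else -1 :: int)"

definition tgt_slope where
  "tgt_slope e = (if e \<in> P then 0 else if crit_param e < L e then -1 else 1 :: int)"

lemma odd_src_slope_iff: "odd (src_slope e) \<longleftrightarrow> e \<notin> P"
  by (simp add: src_slope_def)

lemma rslope_dPW_src:
  assumes "e \<in> E"
  shows "rslope (\<lambda>s. d (at_param G e s)) 0 = of_int (src_slope e)"
proof -
  have "affine_right (\<lambda>s. d (at_param G e s)) 0 (of_int (src_slope e))"
  proof (cases "e \<in> P")
    case True
    then show ?thesis using affine_right_of_affine[OF dPW_on_P] len_pos[OF assms]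
      by (simp add: src_slope_def)
  next
    case False
    show ?thesis
    proof (cases "0 < crit_param e")
      case True
      then show ?thesis using affine_right_of_affine[OF dPW_below_crit[OF assms False]] False
        by (simp add: src_slope_def)
    next
      case not_pos: False
      then have "crit_param e = 0" using crit_param_bounds[OF assms] by linarith
      then show ?thesis
        using affine_right_of_affine[OF dPW_above_crit[OF assms False], of 0] False not_pos len_pos[OF assms]
        by (simp add: src_slope_def)
    qed
  qed
  then show ?thesis by (rule rslope_eq)
qed

lemma lslope_dPW_tgt:
  assumes "e \<in> E"
  shows "lslope (\<lambda>s. d (at_param G e s)) (L e) = of_int (tgt_slope e)"
proof -
  have "affine_left (\<lambda>s. d (at_param G e s)) (L e) (of_int (tgt_slope e))"
  proof (cases "e \<in> P")
    case True
    then show ?thesis using affine_left_of_affine[OF dPW_on_P] len_pos[OF assms]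
      by (simp add: tgt_slope_def)
  next
    case False
    show ?thesis
    proof (cases "crit_param e < L e")
      case True
      then show ?thesis using affine_left_of_affine[OF dPW_above_crit[OF assms False]] False
        by (simp add: tgt_slope_def)
    next
      case not_less: False
      then have "crit_param e = L e" using crit_param_bounds[OF assms] by linarith
      then show ?thesis
        using affine_left_of_affine[OF dPW_below_crit[OF assms False], of "L e"] False not_less len_pos[OF assms]
        by (simp add: tgt_slope_def)
    qed
  qed
  then show ?thesis by (rule lslope_eq)
qed

lemma ord_dPW_Pt:
  assumes "e \<in> E" "0 < t" "t < L e"
  shows "ord_at G d (Pt e t) = (if e \<notin> P \<and> t = crit_param e then -2 else 0)"
proof (cases "e \<in> P")
  case True
  then show ?thesis using assms
      rslope_eq[OF affine_right_of_affine[OF dPW_on_P]] lslope_eq[OF affine_left_of_affine[OF dPW_on_P]]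
    by simp
next
  case False
  note below = dPW_below_crit[OF assms(1) False] and above = dPW_above_crit[OF assms(1) False]
  consider "t < crit_param e" | "t = crit_param e" | "crit_param e < t" by linarith
  then show ?thesis
  proof cases
    case 1
    then show ?thesis using assms
        rslope_eq[OF affine_right_of_affine[OF below]] lslope_eq[OF affine_left_of_affine[OF below]]
      by simp
  next
    case 2
    then show ?thesis using assms False
        rslope_eq[OF affine_right_of_affine[OF above]] lslope_eq[OF affine_left_of_affine[OF below]]
      by simp
  next
    case 3
    then show ?thesis using assms
        rslope_eq[OF affine_right_of_affine[OF above]] lslope_eq[OF affine_left_of_affine[OF above]]
      by simp
  qed
qed

lemma ord_dPW_Vtx:
  assumes "v \<in> V"
  shows "ord_at G d (Vtx v)
       = of_int (\<Sum>e\<in>E. of_bool (src G e = v) * src_slope e - of_bool (tgt G e = v) * tgt_slope e)"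
proof -
  have "ord_at G d (Vtx v) = of_int ((\<Sum>e\<in>{e \<in> E. src G e = v}. src_slope e)
                                    - (\<Sum>e\<in>{e \<in> E. tgt G e = v}. tgt_slope e))"
    unfolding ord_at.simps using rslope_dPW_src lslope_dPW_tgt by (simp add: sum_negf)
  also have "(\<Sum>e\<in>{e \<in> E. src G e = v}. src_slope e) - (\<Sum>e\<in>{e \<in> E. tgt G e = v}. tgt_slope e)
      = (\<Sum>e\<in>E. of_bool (src G e = v) * src_slope e - of_bool (tgt G e = v) * tgt_slope e)"
    using finite_edges by (simp add: sum_subtractf Collect_conj_eq)
  finally show ?thesis .
qed

section \<open>The divisor \<open>D(P,W)\<close>\<close>

lemma mem_sub_edges_iff:
  "x \<in> sub_edges G P W \<longleftrightarrow>
     (\<exists>e. x = (e, Whole) \<and> e \<in> E \<and> \<not> has_crit G P W e)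
   \<or> (\<exists>e pc. x = (e, pc) \<and> e \<in> E \<and> has_crit G P W e \<and> pc \<noteq> Whole)"
  unfolding sub_edges_def by auto

lemma sub_target_halves:
  assumes "e \<in> E" "has_crit G P W e"
  shows "sub_target G P W ori (e, Lo) = Pt e (crit_param e)"
    and "sub_target G P W ori (e, Hi) = Pt e (crit_param e)"
proof -
  have crit: "e \<notin> P" "0 < crit_param e" "crit_param e < L e" using has_crit_iff assms by auto
  then have "d (Pt e (crit_param e)) = crit_param e + d (Vtx (src G e))"
    "d (Pt e (crit_param e)) = L e - crit_param e + d (Vtx (tgt G e))"
    using dPW_Pt[OF assms(1) crit] unfolding crit_param_def by (auto simp: min_def field_simps)
  then show "sub_target G P W ori (e, Lo) = Pt e (crit_param e)"
    and "sub_target G P W ori (e, Hi) = Pt e (crit_param e)"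
    unfolding sub_target_def using crit crit_pt_eq[OF assms] by auto
qed

text \<open>An edge without critical point is oriented towards the endpoint farther from \<open>\<Gamma>(P,W)\<close>,
  which is its source exactly when the critical parameter sits at \<open>0\<close>.\<close>
lemma sub_target_Whole:
  assumes "e \<in> E" "\<not> has_crit G P W e"
  shows "sub_target G P W ori (e, Whole)
       = (if e \<in> P then Vtx (head G ori e) else if crit_param e = 0 then Vtx (src G e) else Vtx (tgt G e))"
proof (cases "e \<in> P")
  case True
  then show ?thesis unfolding sub_target_def head_def by simp
next
  case False
  then have "crit_param e = 0 \<or> crit_param e = L e"
    using has_crit_iff[OF assms(1)] assms(2) crit_param_bounds[OF assms(1)] by auto
  then show ?thesis
    unfolding sub_target_def using False len_pos[OF assms(1)] by (auto simp: crit_param_def)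
qed

lemma D_PW_Pt:
  assumes "e \<in> E" "0 < t" "t < L e"
  shows "D_PW G P W ori (Pt e t) = (if e \<notin> P \<and> t = crit_param e then 1 else 0)"
proof (cases "e \<notin> P \<and> t = crit_param e")
  case True
  then have crit: "has_crit G P W e" using has_crit_iff[OF assms(1)] assms by auto
  have "Pt e t \<in> sub_verts G P W"
    unfolding sub_verts_def using crit_pt_eq[OF assms(1) crit] True assms(1) crit by auto
  moreover have "{x \<in> sub_edges G P W. sub_target G P W ori x = Pt e t} = {(e, Lo), (e, Hi)}"
  proof (intro equalityI subsetI)
    fix x assume "x \<in> {x \<in> sub_edges G P W. sub_target G P W ori x = Pt e t}"
    then have x: "x \<in> sub_edges G P W" "sub_target G P W ori x = Pt e t" by auto
    from x(1) consider (whole) e' where "x = (e', Whole)" "e' \<in> E" "\<not> has_crit G P W e'"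
      | (half) e' pc where "x = (e', pc)" "e' \<in> E" "has_crit G P W e'" "pc \<noteq> Whole"
      unfolding mem_sub_edges_iff by blast
    then show "x \<in> {(e, Lo), (e, Hi)}"
    proof cases
      case whole
      then show ?thesis using x(2) sub_target_Whole[of e' ori] by (auto split: if_splits)
    next
      case half
      then show ?thesis using x(2) sub_target_halves[OF half(2,3), of ori] by (cases pc) auto
    qed
  next
    fix x assume "x \<in> {(e, Lo), (e, Hi)}"
    then show "x \<in> {x \<in> sub_edges G P W. sub_target G P W ori x = Pt e t}"
      using sub_target_halves[OF assms(1) crit] True assms(1) crit unfolding mem_sub_edges_iff by auto
  qed
  ultimately show ?thesis using True assms unfolding D_PW_def indeg_def wext_def by simp
next
  case False
  have "Pt e t \<notin> sub_verts G P W"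
    unfolding sub_verts_def using crit_pt_eq has_crit_iff False by auto
  then show ?thesis using False assms unfolding D_PW_def indeg_def wext_def by simp
qed

lemma D_PW_Vtx:
  assumes "v \<in> V"
  shows "D_PW G P W ori (Vtx v)
       = (\<Sum>e\<in>E. of_bool (\<not> has_crit G P W e \<and> sub_target G P W ori (e, Whole) = Vtx v)) - 1 + int (wt G v)"
proof -
  let ?A = "{e \<in> E. \<not> has_crit G P W e \<and> sub_target G P W ori (e, Whole) = Vtx v}"
  have "{x \<in> sub_edges G P W. sub_target G P W ori x = Vtx v} = (\<lambda>e. (e, Whole)) ` ?A"
  proof (intro equalityI subsetI)
    fix x assume "x \<in> {x \<in> sub_edges G P W. sub_target G P W ori x = Vtx v}"
    then have x: "x \<in> sub_edges G P W" "sub_target G P W ori x = Vtx v" by auto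
    from x(1) consider (whole) e where "x = (e, Whole)" "e \<in> E" "\<not> has_crit G P W e"
      | (half) e pc where "x = (e, pc)" "e \<in> E" "has_crit G P W e" "pc \<noteq> Whole"
      unfolding mem_sub_edges_iff by blast
    then show "x \<in> (\<lambda>e. (e, Whole)) ` ?A"
    proof cases
      case half
      then show ?thesis using x(2) sub_target_halves[OF half(2,3), of ori] by (cases pc) auto
    qed (use x(2) in auto)
  qed (auto simp: mem_sub_edges_iff)
  moreover have "card ((\<lambda>e. (e, Whole)) ` ?A) = card ?A"
    by (rule card_image) (auto simp: inj_on_def)
  moreover have "int (card ?A) = (\<Sum>e\<in>E. of_bool (\<not> has_crit G P W e \<and> sub_target G P W ori (e, Whole) = Vtx v))"
    using finite_edges by (simp add: Collect_conj_eq)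
  ultimately show ?thesis using assms unfolding D_PW_def indeg_def wext_def sub_verts_def by simp
qed

lemma cyclic_orient_balance:
  assumes "cyclic_orient G P ori" "v \<in> V"
  shows "(\<Sum>e\<in>P. of_bool (src G e = v) + of_bool (tgt G e = v) - 2 * of_bool (head G ori e = v)) = (0 :: int)"
proof -
  have "finite P" using P_edges finite_edges finite_subset by blast
  have "(\<Sum>e\<in>P. of_bool (src G e = v) + of_bool (tgt G e = v) - 2 * of_bool (head G ori e = v))
      = (\<Sum>e\<in>P. of_bool (tail G ori e = v) - of_bool (head G ori e = v) :: int)"
    by (intro sum.cong) (auto simp: head_def tail_def)
  also have "\<dots> = int (card {e \<in> P. tail G ori e = v}) - int (card {e \<in> P. head G ori e = v})"
    using \<open>finite P\<close> by (simp add: sum_subtractf Collect_conj_eq)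
  finally show ?thesis using assms unfolding cyclic_orient_def by simp
qed

lemma slope_identity:
  assumes "e \<in> E"
  shows "of_bool (src G e = v) * src_slope e - of_bool (tgt G e = v) * tgt_slope e
       = of_bool (src G e = v) + of_bool (tgt G e = v)
         - 2 * of_bool (\<not> has_crit G P W e \<and> sub_target G P W ori (e, Whole) = Vtx v)
         - (if e \<in> P then of_bool (src G e = v) + of_bool (tgt G e = v) - 2 * of_bool (head G ori e = v) else 0)"
proof -
  consider "e \<in> P" | "e \<notin> P" "crit_param e = 0" | "e \<notin> P" "crit_param e = L e"
    | "e \<notin> P" "0 < crit_param e" "crit_param e < L e"
    using crit_param_bounds[OF assms] by linarith
  then show ?thesis
  proof cases
    case 1
    then show ?thesis using has_crit_iff[OF assms] sub_target_Whole[OF assms, of ori]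
      by (simp add: src_slope_def tgt_slope_def)
  next
    case 2
    then show ?thesis using has_crit_iff[OF assms] sub_target_Whole[OF assms, of ori] len_pos[OF assms]
      by (simp add: src_slope_def tgt_slope_def)
  next
    case 3
    then show ?thesis using has_crit_iff[OF assms] sub_target_Whole[OF assms, of ori] len_pos[OF assms]
      by (simp add: src_slope_def tgt_slope_def)
  next
    case 4
    then show ?thesis using has_crit_iff[OF assms] by (simp add: src_slope_def tgt_slope_def)
  qed
qed

lemma ord_dPW:
  assumes "cyclic_orient G P ori" "p \<in> points G"
  shows "ord_at G d p = of_int (canonical G p - 2 * D_PW G P W ori p)"
proof (cases p)
  case (Pt e t)
  then show ?thesis using assms(2) ord_dPW_Pt D_PW_Pt by (simp add: canonical_def)
next
  case (Vtx v)
  then have "v \<in> V" using assms(2) by simp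
  let ?cyc = "\<lambda>e. of_bool (src G e = v) + of_bool (tgt G e = v) - 2 * of_bool (head G ori e = v) :: int"
  let ?whole = "\<lambda>e. of_bool (\<not> has_crit G P W e \<and> sub_target G P W ori (e, Whole) = Vtx v) :: int"
  have "(\<Sum>e\<in>E. of_bool (src G e = v) * src_slope e - of_bool (tgt G e = v) * tgt_slope e)
      = (\<Sum>e\<in>E. of_bool (src G e = v) + of_bool (tgt G e = v) - 2 * ?whole e)
        - (\<Sum>e\<in>E. if e \<in> P then ?cyc e else 0)"
    unfolding sum_subtractf[symmetric] using slope_identity by (intro sum.cong) auto
  also have "(\<Sum>e\<in>E. if e \<in> P then ?cyc e else 0) = (\<Sum>e\<in>P. ?cyc e)"
  proof -
    have "{e \<in> E. e \<in> P} = P" using P_edges by blast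
    then show ?thesis using finite_edges by (simp add: sum.inter_filter[symmetric])
  qed
  also have "\<dots> = 0" using cyclic_orient_balance[OF assms(1) \<open>v \<in> V\<close>] .
  also have "(\<Sum>e\<in>E. of_bool (src G e = v) + of_bool (tgt G e = v) - 2 * ?whole e)
      = int (vdeg G E v) - 2 * (\<Sum>e\<in>E. ?whole e)"
    using finite_edges by (simp add: sum.distrib sum_subtractf sum_distrib_left vdeg_def Collect_conj_eq)
  finally show ?thesis
    using ord_dPW_Vtx[OF \<open>v \<in> V\<close>] D_PW_Vtx[OF \<open>v \<in> V\<close>] \<open>v \<in> V\<close> Vtx by (simp add: canonical_def)
qed

section \<open>Linear equivalence of the divisors \<open>D(P,W)\<close>\<close>

lemma D_PW_theta_characteristic:
  assumes "cyclic_orient G P ori"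
  shows "lin_equiv G (\<lambda>p. 2 * D_PW G P W ori p) (canonical G)"
proof -
  let ?f = "\<lambda>q. (-1) * d q + 0 * d q"
  have "rational_fun G ?f"
  proof (rule rational_fun_lincomb[where S = slope_set and T = slope_set])
    show "\<forall>m1\<in>slope_set e. \<forall>m2\<in>slope_set e. (-1) * m1 + 0 * m2 \<in> \<int>" for e
      unfolding slope_set_def by simp
  qed (use dPW_piecewise_affine in blast)+
  moreover have "of_int (2 * D_PW G P W ori p - canonical G p) = ord_at G ?f p" if "p \<in> points G" for p
  proof -
    have "ord_at G ?f p = (-1) * ord_at G d p + 0 * ord_at G d p"
      using ord_at_lincomb[OF edgewise_piecewise_affine_dPW edgewise_piecewise_affine_dPW that] .
    then show ?thesis using ord_dPW[OF assms that] by simp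
  qed
  ultimately show ?thesis unfolding lin_equiv_def by blast
qed

lemma D_PW_lin_equiv_change_W:
  assumes "trop_curve_PW G P W'" "cyclic_orient G P ori" "cyclic_orient G P ori'"
  shows "lin_equiv G (D_PW G P W ori) (D_PW G P W' ori')"
proof -
  interpret W': trop_curve_PW G P W' by (rule assms(1))
  let ?f = "\<lambda>q. (1/2) * dPW G P W' q + (-1/2) * d q"
  have "W'.slope_set = slope_set" unfolding slope_set_def W'.slope_set_def ..
  have "rational_fun G ?f"
  proof (rule rational_fun_lincomb[where S = slope_set and T = slope_set])
    show "\<forall>m1\<in>slope_set e. \<forall>m2\<in>slope_set e. (1/2) * m1 + (-1/2) * m2 \<in> \<int>" for e
      unfolding slope_set_def by auto
  qed (use dPW_piecewise_affine W'.dPW_piecewise_affine \<open>W'.slope_set = slope_set\<close> in auto)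
  moreover have "of_int (D_PW G P W ori p - D_PW G P W' ori' p) = ord_at G ?f p" if "p \<in> points G" for p
  proof -
    have "ord_at G ?f p = (1/2) * ord_at G (dPW G P W') p + (-1/2) * ord_at G d p"
      using ord_at_lincomb[OF W'.edgewise_piecewise_affine_dPW edgewise_piecewise_affine_dPW that] .
    then show ?thesis using ord_dPW[OF assms(2) that] W'.ord_dPW[OF assms(3) that] by (simp add: algebra_simps)
  qed
  ultimately show ?thesis unfolding lin_equiv_def by blast
qed

lemma D_PW_lin_equiv_imp_eq:
  assumes "trop_curve_PW G P' W'" "cyclic_orient G P ori" "cyclic_orient G P' ori'"
    and "lin_equiv G (D_PW G P W ori) (D_PW G P' W' ori')"
  shows "P = P'"
proof (rule ccontr)
  assume "P \<noteq> P'"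
  interpret P': trop_curve_PW G P' W' by (rule assms(1))
  obtain f where f: "rational_fun G f"
    and div_f: "\<forall>p\<in>points G. of_int (D_PW G P W ori p - D_PW G P' W' ori' p) = ord_at G f p"
    using assms(4) unfolding lin_equiv_def by blast
  define w where "w = (\<lambda>q. 1 * d q + (-1) * dPW G P' W' q)"
  define h where "h = (\<lambda>q. 2 * f q + 1 * w q)"
  have w: "edgewise_piecewise_affine w"
    unfolding w_def using edgewise_piecewise_affine_dPW P'.edgewise_piecewise_affine_dPW
    by (rule edgewise_piecewise_affine_lincomb)
  have f': "edgewise_piecewise_affine f" using f by (rule rational_fun_edgewise_piecewise_affine)
  have "ord_at G h p = 0" if "p \<in> points G" for p
  proof -
    have "ord_at G h p = 2 * ord_at G f p + 1 * ord_at G w p"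
      unfolding h_def using ord_at_lincomb[OF f' w that] .
    also have "ord_at G w p = 1 * ord_at G d p + (-1) * ord_at G (dPW G P' W') p"
      unfolding w_def using ord_at_lincomb[OF edgewise_piecewise_affine_dPW P'.edgewise_piecewise_affine_dPW that] .
    finally show ?thesis
      using div_f[rule_format, OF that] ord_dPW[OF assms(2) that] P'.ord_dPW[OF assms(3) that] by simp
  qed
  then have slope_h: "rslope (\<lambda>s. h (at_param G e s)) 0 = 0" if "e \<in> E" for e
    using ord_at_zero_rslope_zero[OF edgewise_piecewise_affine_lincomb[OF f' w]] that unfolding h_def by blast
  obtain e where e: "e \<in> E" "e \<in> P \<longleftrightarrow> e \<notin> P'"
    using \<open>P \<noteq> P'\<close> P_edges P'.P_edges by blast
  obtain k where k: "rslope (\<lambda>s. f (at_param G e s)) 0 = of_int k"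
    using rational_fun_rslope_Ints[OF f e(1)] by (auto elim: Ints_cases)
  have "rslope (\<lambda>s. h (at_param G e s)) 0
      = 2 * rslope (\<lambda>s. f (at_param G e s)) 0 + 1 * rslope (\<lambda>s. w (at_param G e s)) 0"
    unfolding h_def using rslope_lincomb[OF f' w e(1), of 0 2 1] len_pos[OF e(1)] by simp
  also have "rslope (\<lambda>s. w (at_param G e s)) 0
      = 1 * rslope (\<lambda>s. d (at_param G e s)) 0 + (-1) * rslope (\<lambda>s. dPW G P' W' (at_param G e s)) 0"
    unfolding w_def
    using rslope_lincomb[OF edgewise_piecewise_affine_dPW P'.edgewise_piecewise_affine_dPW e(1), of 0 1 "-1"]
      len_pos[OF e(1)]
    by simp
  finally have "of_int (2 * k + src_slope e - P'.src_slope e) = (0 :: real)"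
    using slope_h[OF e(1)] k rslope_dPW_src[OF e(1)] P'.rslope_dPW_src[OF e(1)] by simp
  then have "2 * k + src_slope e - P'.src_slope e = 0" by (simp only: of_int_eq_0_iff)
  then have "odd (src_slope e) \<longleftrightarrow> odd (P'.src_slope e)" by presburger
  then show False using e(2) odd_src_slope_iff P'.odd_src_slope_iff by blast
qed

end

theorem proposition3p4:
  fixes G :: "('v, 'e) tcurve"
    and P P' :: "'e set" and W W' :: "'v set" and ori ori' :: "'e \<Rightarrow> bool"
  assumes "tropical_curve G"
    and "even_subgraph G P" and "W \<subseteq> verts G" and "P \<noteq> {} \<or> W \<noteq> {}"
    and "cyclic_orient G P ori"
    and "even_subgraph G P'" and "W' \<subseteq> verts G" and "P' \<noteq> {} \<or> W' \<noteq> {}"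
    and "cyclic_orient G P' ori'"
  shows "(lin_equiv G (D_PW G P W ori) (D_PW G P' W' ori') \<longleftrightarrow> P = P')
         \<and> lin_equiv G (\<lambda>p. 2 * D_PW G P W ori p) (canonical G)"
proof -
  interpret PW: trop_curve_PW G P W
    using assms(1-4) by unfold_locales auto
  have PW': "trop_curve_PW G P' W'"
    using assms(1,6-8) by unfold_locales auto
  have same_P: "lin_equiv G (D_PW G P W ori) (D_PW G P' W' ori')" if "P = P'"
    using PW.D_PW_lin_equiv_change_W[of W' ori ori'] PW' assms(5,9) that by simp
  show ?thesis
    using PW.D_PW_lin_equiv_imp_eq[OF PW' assms(5,9)] same_P PW.D_PW_theta_characteristic[OF assms(5)]
    by blast
qed

end
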